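(* Let $L$ be an $r\times s$ $\boldsymbol\rho$-latin rectangle with $r,s\le n$ and $n>\min\{r,s\}$, such that $e_\ell\ge\rho_\ell-n+\max\{r,s\}$ for all $\ell\in[k]$. Then $L$ can be completed to an $n\times n$ $\boldsymbol\rho$-latin square if and only if one (equivalently, every one) of the following conditions holds: (1) for all $I\subseteq[r]$ and $J\subseteq[s]$: $$|I|(n-s)+|J|(n-r)\le\sum_{\ell\in[k]}\min\{\rho_\ell-e_\ell,\ \mu_I(\ell)+\mu_J(\ell)\};$$ (2) for all $I\subseteq[r]$, $J\subseteq[s]$ and $K\subseteq[k]$: $$\sum_{\ell\in K}(\rho_\ell-e_\ell)\ge\sum_{i\in I}\big((n-s)\dot-\mu_{\bar K}(i)\big)+\sum_{j\in J}\big((n-r)\dot-\mu_{\bar K}(j)\big).$$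
   Context: Let $n,k$ be positive integers. Let $\boldsymbol\rho=(\rho_1,\dots,\rho_k)$ be integers with $1\le\rho_\ell\le n\le k$ and $\sum_\ell\rho_\ell=n^2$. A $\boldsymbol\rho$-latin square of order $n$ is an $n\times n$ array with entries in $[k]$, each symbol at most once per row and per column, and symbol $\ell$ occurring exactly $\rho_\ell$ times. An $r\times s$ $\boldsymbol\rho$-latin rectangle is an $r\times s$ array with entries in $[k]$, each symbol at most once per row and per column, and symbol $\ell$ occurring at most $\rho_\ell$ times. Completing it means finding a $\boldsymbol\rho$-latin square of order $n$ whose top-left $r\times s$ subarray is $L$. $e_\ell$ is the number of occurrences of $\ell$ in $L$. For $i\in[r]$, $j\in[s]$, $\ell\in[k]$, $I\subseteq[r]$, $J\subseteq[s]$, $K\subseteq[k]$: - $\mu_K(i)$ (resp. $\mu_K(j)$) is the number of symbols of $K$ not occurring in row $i$ (resp. column $j$) of $L$; - $\mu_I(\ell)$ (resp. $\mu_J(\ell)$) is the number of rows in $I$ (resp. columns in $J$) not containing $\ell$. $\bar K=[k]\setminus K$ and $x\dot- y=\max\{0,x-y\}$. *)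

theory Defs
  imports Main
begin

text \<open>An array is a function L :: nat => nat => nat; only its values on the index
  range matter. rho :: nat => nat gives the prescribed multiplicity of each symbol.\<close>

definition occ :: "nat \<Rightarrow> nat \<Rightarrow> (nat \<Rightarrow> nat \<Rightarrow> nat) \<Rightarrow> nat \<Rightarrow> nat" where
  "occ r s L l = card {(i, j). i \<in> {1..r} \<and> j \<in> {1..s} \<and> L i j = l}"

definition rho_latin_rectangle ::
  "nat \<Rightarrow> (nat \<Rightarrow> nat) \<Rightarrow> nat \<Rightarrow> nat \<Rightarrow> (nat \<Rightarrow> nat \<Rightarrow> nat) \<Rightarrow> bool" where
  "rho_latin_rectangle k rho r s L \<longleftrightarrow>
     (\<forall>i\<in>{1..r}. \<forall>j\<in>{1..s}. L i j \<in> {1..k}) \<and>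
     (\<forall>i\<in>{1..r}. inj_on (\<lambda>j. L i j) {1..s}) \<and>
     (\<forall>j\<in>{1..s}. inj_on (\<lambda>i. L i j) {1..r}) \<and>
     (\<forall>l\<in>{1..k}. occ r s L l \<le> rho l)"

definition rho_latin_square ::
  "nat \<Rightarrow> (nat \<Rightarrow> nat) \<Rightarrow> nat \<Rightarrow> (nat \<Rightarrow> nat \<Rightarrow> nat) \<Rightarrow> bool" where
  "rho_latin_square k rho n M \<longleftrightarrow>
     (\<forall>i\<in>{1..n}. \<forall>j\<in>{1..n}. M i j \<in> {1..k}) \<and>
     (\<forall>i\<in>{1..n}. inj_on (\<lambda>j. M i j) {1..n}) \<and>
     (\<forall>j\<in>{1..n}. inj_on (\<lambda>i. M i j) {1..n}) \<and>
     (\<forall>l\<in>{1..k}. occ n n M l = rho l)"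

definition completable ::
  "nat \<Rightarrow> (nat \<Rightarrow> nat) \<Rightarrow> nat \<Rightarrow> nat \<Rightarrow> nat \<Rightarrow> (nat \<Rightarrow> nat \<Rightarrow> nat) \<Rightarrow> bool" where
  "completable k rho n r s L \<longleftrightarrow>
     (\<exists>M. rho_latin_square k rho n M \<and> (\<forall>i\<in>{1..r}. \<forall>j\<in>{1..s}. M i j = L i j))"

definition mu_row :: "nat \<Rightarrow> (nat \<Rightarrow> nat \<Rightarrow> nat) \<Rightarrow> nat set \<Rightarrow> nat \<Rightarrow> nat" where
  "mu_row s L K i = card {l \<in> K. \<forall>j\<in>{1..s}. L i j \<noteq> l}"

definition mu_col :: "nat \<Rightarrow> (nat \<Rightarrow> nat \<Rightarrow> nat) \<Rightarrow> nat set \<Rightarrow> nat \<Rightarrow> nat" where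
  "mu_col r L K j = card {l \<in> K. \<forall>i\<in>{1..r}. L i j \<noteq> l}"

definition mu_rows :: "nat \<Rightarrow> (nat \<Rightarrow> nat \<Rightarrow> nat) \<Rightarrow> nat set \<Rightarrow> nat \<Rightarrow> nat" where
  "mu_rows s L I l = card {i \<in> I. \<forall>j\<in>{1..s}. L i j \<noteq> l}"

definition mu_cols :: "nat \<Rightarrow> (nat \<Rightarrow> nat \<Rightarrow> nat) \<Rightarrow> nat set \<Rightarrow> nat \<Rightarrow> nat" where
  "mu_cols r L J l = card {j \<in> J. \<forall>i\<in>{1..r}. L i j \<noteq> l}"

end

(*
  Completing L means choosing for every row i the set R i of n - s symbols to be placed to the
  right of L, for every column j the set C j of n - r symbols to be placed below L, and for every
  symbol l the number w l of its copies in the lower right (n - r) \<times> (n - s) block, subject to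
  the obvious counting constraints (an outline).  Every outline is realised by a latin square:
  the next column is found by a regular assignment of the symbols to the rows, the lower part
  of the column and a dummy vertex, and rows are added by transposition.

  Choosing R and C is an integral transportation problem from the rows and columns of L to the
  symbols, where symbol l has capacity \<rho>_l - e_l and can go only to lines missing it.  Gale's
  supply-demand theorem turns its solvability into condition (1); the hypothesis
  e_l \<ge> \<rho>_l - n + max r s guarantees that the remaining copies w l fit into the lower right
  block.  Necessity of (1) is a count of the cells outside L, and (2) is (1) with the sum of
  minima split at K = {l. \<rho>_l - e_l \<le> \<mu>_I(l) + \<mu>_J(l)}.
*)
theory Submission
  imports Defs
begin

section \<open>Finite sums and counting\<close>

lemma card_filter_sum:
  "finite S \<Longrightarrow> card {x\<in>S. P x} = (\<Sum>x\<in>S. if P x then 1 else 0)"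
  by (simp add: sum.If_cases Int_def)

lemma sum_card_filter_swap:
  assumes "finite S" "finite T"
  shows "(\<Sum>y\<in>T. card {x\<in>S. P x y}) = (\<Sum>x\<in>S. card {y\<in>T. P x y})"
  using assms by (simp add: card_filter_sum sum.swap[of _ T])

lemma sum_card_fibres:
  assumes "finite S" "finite T" "\<forall>x\<in>S. f x \<in> T"
  shows "(\<Sum>y\<in>T. card {x\<in>S. f x = y}) = card S"
proof -
  have "(\<Sum>y\<in>T. card {x\<in>S. f x = y}) = (\<Sum>x\<in>S. card {y\<in>T. f x = y})"
    by (rule sum_card_filter_swap[OF assms(1,2)])
  also have "\<dots> = (\<Sum>x\<in>S. card {f x})"
  proof (rule sum.cong)
    fix x assume "x \<in> S"
    then have "{y\<in>T. f x = y} = {f x}" using assms(3) by auto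
    then show "card {y\<in>T. f x = y} = card {f x}" by simp
  qed simp
  finally show ?thesis by simp
qed

lemma sum_eq_1_indicator:
  fixes h :: "'a \<Rightarrow> nat"
  assumes "finite T" "(\<Sum>v\<in>T. h v) = 1" "v0 \<in> T" "0 < h v0" "v \<in> T"
  shows "h v = (if v = v0 then 1 else 0)"
proof -
  have "(\<Sum>v\<in>T. h v) = h v0 + (\<Sum>v\<in>T - {v0}. h v)" using assms by (simp add: sum.remove)
  then have "h v0 = 1" "(\<Sum>v\<in>T - {v0}. h v) = 0" using assms by linarith+
  then show ?thesis using assms by auto
qed

lemma sum_le_1_eq_card:
  fixes g :: "'a \<Rightarrow> nat"
  assumes "finite K" "\<forall>l\<in>K. g l \<le> 1"
  shows "(\<Sum>l\<in>K. g l) = card {l\<in>K. g l = 1}"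
proof -
  have "(\<Sum>l\<in>K. g l) = (\<Sum>l\<in>K. if g l = 1 then 1 else 0)"
    using assms(2) by (intro sum.cong) (auto simp: le_Suc_eq)
  then show ?thesis by (simp add: card_filter_sum[OF assms(1)])
qed

lemma card_preimage_inj_on:
  assumes "inj_on p A"
  shows "card {i\<in>A. p i = l} = (if l \<in> p ` A then 1 else 0)"
proof (cases "l \<in> p ` A")
  case True
  then obtain i0 where "i0 \<in> A" "l = p i0" by blast
  then have "{i\<in>A. p i = l} = {i0}" using assms by (auto simp: inj_on_eq_iff)
  then show ?thesis using True by simp
next
  case False
  then have "{i\<in>A. p i = l} = {}" by auto
  then show ?thesis using False by (simp only: card.empty if_False)
qed

lemma sum_Inl_Inr:
  assumes "finite I" "finite J"
  shows "(\<Sum>x\<in>Inl ` I \<union> Inr ` J. h x) = (\<Sum>i\<in>I. h (Inl i)) + (\<Sum>j\<in>J. h (Inr j))"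
proof -
  have "(\<Sum>x\<in>Inl ` I \<union> Inr ` J. h x) = (\<Sum>x\<in>Inl ` I. h x) + (\<Sum>x\<in>Inr ` J. h x)"
    by (rule sum.union_disjoint) (use assms in auto)
  then show ?thesis by (simp add: sum.reindex)
qed

lemma min_add_le_min_split:
  fixes b p q :: nat
  shows "min b (p + q) \<le> min b p + min (b - min b p) q"
  unfolding min_def by arith

lemma sum_min_le_split:
  fixes b g :: "'a \<Rightarrow> nat"
  assumes "finite S" "K \<subseteq> S"
  shows "(\<Sum>l\<in>S. min (b l) (g l)) \<le> (\<Sum>l\<in>K. b l) + (\<Sum>l\<in>S - K. g l)"
proof -
  have "(\<Sum>l\<in>S. min (b l) (g l)) = (\<Sum>l\<in>K. min (b l) (g l)) + (\<Sum>l\<in>S - K. min (b l) (g l))"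
    using sum.subset_diff[OF assms(2,1)] by (simp only: add.commute)
  also have "\<dots> \<le> (\<Sum>l\<in>K. b l) + (\<Sum>l\<in>S - K. g l)"
    by (intro add_mono sum_mono) auto
  finally show ?thesis .
qed

lemma sum_min_eq_split:
  fixes b g :: "'a \<Rightarrow> nat"
  assumes "finite S"
  shows "(\<Sum>l\<in>S. min (b l) (g l))
       = (\<Sum>l\<in>{l\<in>S. b l \<le> g l}. b l) + (\<Sum>l\<in>S - {l\<in>S. b l \<le> g l}. g l)"
proof -
  let ?K = "{l\<in>S. b l \<le> g l}"
  have "?K \<subseteq> S" by auto
  from sum.subset_diff[OF this assms, of "\<lambda>l. min (b l) (g l)"]
  have "(\<Sum>l\<in>S. min (b l) (g l)) = (\<Sum>l\<in>?K. min (b l) (g l)) + (\<Sum>l\<in>S - ?K. min (b l) (g l))"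
    by (simp only: add.commute)
  also have "(\<Sum>l\<in>?K. min (b l) (g l)) = (\<Sum>l\<in>?K. b l)" by (intro sum.cong) auto
  also have "(\<Sum>l\<in>S - ?K. min (b l) (g l)) = (\<Sum>l\<in>S - ?K. g l)" by (intro sum.cong) auto
  finally show ?thesis .
qed

lemma sum_diff_add_ge:
  fixes c :: nat
  shows "card I * c \<le> (\<Sum>i\<in>I. c - f i) + (\<Sum>i\<in>I. f i)"
proof -
  have "card I * c = (\<Sum>i\<in>I. c)" by simp
  also have "\<dots> \<le> (\<Sum>i\<in>I. (c - f i) + f i)" by (intro sum_mono) auto
  finally show ?thesis by (simp add: sum.distrib)
qed

lemma sum_diff_add_eq:
  fixes c :: nat
  assumes "\<forall>i\<in>I. f i \<le> c"
  shows "(\<Sum>i\<in>I. c - f i) + (\<Sum>i\<in>I. f i) = card I * c"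
proof -
  have "(\<Sum>i\<in>I. c - f i) + (\<Sum>i\<in>I. f i) = (\<Sum>i\<in>I. (c - f i) + f i)" by (simp add: sum.distrib)
  also have "\<dots> = (\<Sum>i\<in>I. c)" using assms by (intro sum.cong) auto
  finally show ?thesis by simp
qed

lemma add_cross_terms_eq_square:
  fixes W n r s :: nat
  assumes "r \<le> n" "s \<le> n" "W + r * (n - s) + s * (n - r) + r * s = n ^ 2"
  shows "W = (n - r) * (n - s)"
proof -
  obtain p q where pq: "n = r + p" "n = s + q" using assms(1,2) le_Suc_ex by metis
  have "n ^ 2 = (r + p) * (s + q)"
    unfolding power2_eq_square by (simp only: pq(1)[symmetric] pq(2)[symmetric])
  moreover have "(r + p) * (s + q) = r * s + r * q + s * p + p * q" by (simp add: algebra_simps)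
  moreover have "n - r = p" "n - s = q" using pq by simp_all
  ultimately show ?thesis using assms(3) by (simp add: mult.commute[of q p] mult.commute[of q r])
qed

section \<open>Integral transports\<close>

definition gale_condition ::
  "'a set \<Rightarrow> 'b set \<Rightarrow> ('a \<Rightarrow> nat) \<Rightarrow> ('b \<Rightarrow> nat) \<Rightarrow> ('a \<Rightarrow> 'b \<Rightarrow> nat) \<Rightarrow> bool" where
  "gale_condition X Y a b m \<longleftrightarrow>
     (\<forall>A\<subseteq>X. (\<Sum>x\<in>A. a x) \<le> (\<Sum>y\<in>Y. min (b y) (\<Sum>x\<in>A. m x y)))"

definition is_transport ::
  "'a set \<Rightarrow> 'b set \<Rightarrow> ('a \<Rightarrow> nat) \<Rightarrow> ('b \<Rightarrow> nat) \<Rightarrow> ('a \<Rightarrow> 'b \<Rightarrow> nat)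
     \<Rightarrow> ('a \<Rightarrow> 'b \<Rightarrow> nat) \<Rightarrow> bool" where
  "is_transport X Y a b m f \<longleftrightarrow>
     (\<forall>x y. f x y \<le> m x y) \<and> (\<forall>x\<in>X. (\<Sum>y\<in>Y. f x y) = a x) \<and> (\<forall>y\<in>Y. (\<Sum>x\<in>X. f x y) \<le> b y)"

lemma gale_conditionD:
  "gale_condition X Y a b m \<Longrightarrow> A \<subseteq> X \<Longrightarrow> (\<Sum>x\<in>A. a x) \<le> (\<Sum>y\<in>Y. min (b y) (\<Sum>x\<in>A. m x y))"
  unfolding gale_condition_def by blast

lemma gale_condition_subset:
  "gale_condition X Y a b m \<Longrightarrow> A \<subseteq> X \<Longrightarrow> gale_condition A Y a b m"
  unfolding gale_condition_def by blast

lemma is_transport_zero: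
  assumes "\<forall>x\<in>X. a x = 0"
  shows "is_transport X Y a b m (\<lambda>x y. 0)"
  using assms unfolding is_transport_def by simp

text \<open>A transport of a tight set A saturates min (b y) (\<Sum>x\<in>A. m x y) at every y.\<close>
lemma gale_condition_residual:
  assumes fX: "finite X" and fY: "finite Y" and gale: "gale_condition X Y a b m" and AX: "A \<subseteq> X"
    and tight: "(\<Sum>x\<in>A. a x) = (\<Sum>y\<in>Y. min (b y) (\<Sum>x\<in>A. m x y))"
    and fa: "is_transport A Y a b m f"
  shows "gale_condition (X - A) Y a (\<lambda>y. b y - (\<Sum>x\<in>A. f x y)) m"
proof -
  define d where "d y = (\<Sum>x\<in>A. f x y)" for y
  have fA: "finite A" using AX fX finite_subset by blast
  have d_le: "d y \<le> min (b y) (\<Sum>x\<in>A. m x y)" if "y \<in> Y" for y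
    using fa that unfolding is_transport_def d_def by (simp add: sum_mono)
  have "(\<Sum>y\<in>Y. d y) = (\<Sum>x\<in>A. \<Sum>y\<in>Y. f x y)"
    unfolding d_def by (rule sum.swap)
  also have "\<dots> = (\<Sum>y\<in>Y. min (b y) (\<Sum>x\<in>A. m x y))"
    using fa tight unfolding is_transport_def by simp
  finally have sum_d: "(\<Sum>y\<in>Y. d y) = (\<Sum>y\<in>Y. min (b y) (\<Sum>x\<in>A. m x y))" .
  have d_eq: "d y = min (b y) (\<Sum>x\<in>A. m x y)" if "y \<in> Y" for y
    using sum_mono_inv[OF sum_d d_le that fY] by simp
  show ?thesis
    unfolding gale_condition_def d_def[symmetric]
  proof (intro allI impI)
    fix C assume C: "C \<subseteq> X - A"
    have fC: "finite C" using C fX finite_subset by blast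
    have disj: "A \<inter> C = {}" using C by blast
    have "(\<Sum>x\<in>A. a x) + (\<Sum>x\<in>C. a x) = (\<Sum>x\<in>A \<union> C. a x)"
      by (simp add: sum.union_disjoint[OF fA fC disj])
    also have "\<dots> \<le> (\<Sum>y\<in>Y. min (b y) (\<Sum>x\<in>A \<union> C. m x y))"
      using gale C AX by (intro gale_conditionD) auto
    also have "\<dots> = (\<Sum>y\<in>Y. min (b y) ((\<Sum>x\<in>A. m x y) + (\<Sum>x\<in>C. m x y)))"
      by (simp add: sum.union_disjoint[OF fA fC disj])
    also have "\<dots> \<le> (\<Sum>y\<in>Y. min (b y) (\<Sum>x\<in>A. m x y) + min (b y - d y) (\<Sum>x\<in>C. m x y))"
      by (intro sum_mono) (simp add: d_eq min_add_le_min_split)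
    also have "\<dots> = (\<Sum>x\<in>A. a x) + (\<Sum>y\<in>Y. min (b y - d y) (\<Sum>x\<in>C. m x y))"
      by (simp add: sum.distrib tight)
    finally show "(\<Sum>x\<in>C. a x) \<le> (\<Sum>y\<in>Y. min (b y - d y) (\<Sum>x\<in>C. m x y))" by simp
  qed
qed

lemma is_transport_union:
  assumes fX: "finite A" "finite B" and disj: "A \<inter> B = {}"
    and f: "is_transport A Y a b m f"
    and g: "is_transport B Y a (\<lambda>y. b y - (\<Sum>x\<in>A. f x y)) m g"
  shows "is_transport (A \<union> B) Y a b m (\<lambda>x y. if x \<in> A then f x y else g x y)"
  unfolding is_transport_def
proof (intro conjI ballI allI)
  fix x y show "(if x \<in> A then f x y else g x y) \<le> m x y"
    using f g unfolding is_transport_def by simp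
next
  fix x assume "x \<in> A \<union> B"
  then show "(\<Sum>y\<in>Y. if x \<in> A then f x y else g x y) = a x"
    using f g disj unfolding is_transport_def by (cases "x \<in> A") auto
next
  fix y assume y: "y \<in> Y"
  have "(\<Sum>x\<in>A \<union> B. if x \<in> A then f x y else g x y) = (\<Sum>x\<in>A. f x y) + (\<Sum>x\<in>B. g x y)"
    using disj by (simp add: sum.union_disjoint[OF fX disj] cong: sum.cong) (intro sum.cong; auto)
  also have "\<dots> \<le> b y"
    using f g y unfolding is_transport_def by fastforce
  finally show "(\<Sum>x\<in>A \<union> B. if x \<in> A then f x y else g x y) \<le> b y" .
qed

text \<open>Without tight proper subsets, one unit can be sent along any usable edge (x0, y0): sets
  containing x0 lose one unit on both sides, the others have slack to lose one on the right.\<close>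
lemma gale_condition_decrement:
  assumes fX: "finite X" and fY: "finite Y" and gale: "gale_condition X Y a b m"
    and x0: "x0 \<in> X" "0 < a x0" and y0: "y0 \<in> Y" "0 < b y0" "0 < m x0 y0"
    and slack: "\<And>A. A \<noteq> {} \<Longrightarrow> A \<subset> X \<Longrightarrow>
      (\<Sum>x\<in>A. a x) < (\<Sum>y\<in>Y. min (b y) (\<Sum>x\<in>A. m x y))"
  shows "gale_condition X Y (a(x0 := a x0 - 1)) (b(y0 := b y0 - 1))
           (\<lambda>x y. if x = x0 \<and> y = y0 then m x y - 1 else m x y)"
    (is "gale_condition X Y ?a ?b ?m")
  unfolding gale_condition_def
proof (intro allI impI)
  fix A assume AX: "A \<subseteq> X"
  have fA: "finite A" using AX fX finite_subset by blast
  have split_y0: "(\<Sum>y\<in>Y. h y) = h y0 + (\<Sum>y\<in>Y - {y0}. h y)" for h :: "'b \<Rightarrow> nat"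
    using fY y0 by (simp add: sum.remove)
  have rest: "(\<Sum>y\<in>Y - {y0}. min (?b y) (\<Sum>x\<in>A. ?m x y)) = (\<Sum>y\<in>Y - {y0}. min (b y) (\<Sum>x\<in>A. m x y))"
    by (intro sum.cong) auto
  show "(\<Sum>x\<in>A. ?a x) \<le> (\<Sum>y\<in>Y. min (?b y) (\<Sum>x\<in>A. ?m x y))"
  proof (cases "x0 \<in> A")
    case True
    have split_x0: "(\<Sum>x\<in>A. h x) = h x0 + (\<Sum>x\<in>A - {x0}. h x)" for h :: "'a \<Rightarrow> nat"
      using fA True by (simp add: sum.remove)
    have "(\<Sum>x\<in>A - {x0}. ?a x) = (\<Sum>x\<in>A - {x0}. a x)" by (intro sum.cong) auto
    then have a_dec: "(\<Sum>x\<in>A. ?a x) + 1 = (\<Sum>x\<in>A. a x)"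
      using split_x0[of a] split_x0[of ?a] x0 by simp
    have "(\<Sum>x\<in>A - {x0}. ?m x y0) = (\<Sum>x\<in>A - {x0}. m x y0)" by (intro sum.cong) auto
    then have "(\<Sum>x\<in>A. ?m x y0) + 1 = (\<Sum>x\<in>A. m x y0)"
      using split_x0[of "\<lambda>x. m x y0"] split_x0[of "\<lambda>x. ?m x y0"] y0 by simp
    then have "min (?b y0) (\<Sum>x\<in>A. ?m x y0) + 1 = min (b y0) (\<Sum>x\<in>A. m x y0)"
      using y0 by (simp add: min_def split: if_splits; arith)
    then have "(\<Sum>y\<in>Y. min (b y) (\<Sum>x\<in>A. m x y)) = (\<Sum>y\<in>Y. min (?b y) (\<Sum>x\<in>A. ?m x y)) + 1"
      using split_y0[of "\<lambda>y. min (b y) (\<Sum>x\<in>A. m x y)"] split_y0[of "\<lambda>y. min (?b y) (\<Sum>x\<in>A. ?m x y)"] rest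
      by simp
    then show ?thesis using a_dec gale_conditionD[OF gale AX] by linarith
  next
    case False
    have a_eq: "(\<Sum>x\<in>A. ?a x) = (\<Sum>x\<in>A. a x)" using False by (intro sum.cong) auto
    show ?thesis
    proof (cases "A = {}")
      case False
      have "A \<subset> X" using AX \<open>x0 \<notin> A\<close> x0 by blast
      have "(\<Sum>x\<in>A. ?m x y0) = (\<Sum>x\<in>A. m x y0)" using \<open>x0 \<notin> A\<close> by (intro sum.cong) auto
      then have "min (b y0) (\<Sum>x\<in>A. m x y0) \<le> min (?b y0) (\<Sum>x\<in>A. ?m x y0) + 1"
        by (simp add: min_def; arith)
      then have "(\<Sum>y\<in>Y. min (b y) (\<Sum>x\<in>A. m x y)) \<le> (\<Sum>y\<in>Y. min (?b y) (\<Sum>x\<in>A. ?m x y)) + 1"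
        using split_y0[of "\<lambda>y. min (b y) (\<Sum>x\<in>A. m x y)"] split_y0[of "\<lambda>y. min (?b y) (\<Sum>x\<in>A. ?m x y)"] rest
        by simp
      then show ?thesis using slack[OF False \<open>A \<subset> X\<close>] a_eq by simp
    qed simp
  qed
qed

lemma is_transport_increment:
  assumes fX: "finite X" and fY: "finite Y" and x0: "x0 \<in> X" "0 < a x0" and y0: "y0 \<in> Y" "0 < b y0" "0 < m x0 y0"
    and f: "is_transport X Y (a(x0 := a x0 - 1)) (b(y0 := b y0 - 1))
              (\<lambda>x y. if x = x0 \<and> y = y0 then m x y - 1 else m x y) f"
  shows "is_transport X Y a b m (\<lambda>x y. f x y + (if x = x0 \<and> y = y0 then 1 else 0))"
  unfolding is_transport_def
proof (intro conjI ballI allI)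
  fix x y
  have "f x y \<le> (if x = x0 \<and> y = y0 then m x y - 1 else m x y)"
    using f unfolding is_transport_def by blast
  then show "f x y + (if x = x0 \<and> y = y0 then 1 else 0) \<le> m x y"
    using y0 by (auto split: if_splits)
next
  fix x assume "x \<in> X"
  moreover have "(\<Sum>y\<in>Y. (if x = x0 \<and> y = y0 then 1 else 0::nat)) = (if x = x0 then 1 else 0)"
    using fY y0 by (auto simp: sum.delta)
  ultimately show "(\<Sum>y\<in>Y. f x y + (if x = x0 \<and> y = y0 then 1 else 0)) = a x"
    using f x0 unfolding is_transport_def by (auto simp: sum.distrib)
next
  fix y assume "y \<in> Y"
  moreover have "(\<Sum>x\<in>X. (if x = x0 \<and> y = y0 then 1 else 0::nat)) = (if y = y0 then 1 else 0)"
    using fX x0 by (auto simp: sum.delta)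
  ultimately show "(\<Sum>x\<in>X. f x y + (if x = x0 \<and> y = y0 then 1 else 0)) \<le> b y"
    using f y0 unfolding is_transport_def by (auto simp: sum.distrib split: if_splits)
qed

text \<open>Gale's supply--demand theorem for integral transports, by induction on the number of
  sources plus the total supply: split along a tight proper subset if there is one, otherwise
  send one unit along some edge.\<close>
theorem gale_transport_exists:
  assumes "finite X" "finite Y" "gale_condition X Y a b m"
  shows "\<exists>f. is_transport X Y a b m f"
  using assms
proof (induction "card X + sum a X" arbitrary: X a b m rule: less_induct)
  case less
  note fX = less.prems(1) and fY = less.prems(2) and gale = less.prems(3)
  show ?case
  proof (cases "\<exists>A. A \<noteq> {} \<and> A \<subset> X \<and> (\<Sum>x\<in>A. a x) = (\<Sum>y\<in>Y. min (b y) (\<Sum>x\<in>A. m x y))")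
    case True
    then obtain A where A: "A \<noteq> {}" "A \<subset> X"
      and tight: "(\<Sum>x\<in>A. a x) = (\<Sum>y\<in>Y. min (b y) (\<Sum>x\<in>A. m x y))" by blast
    have fA: "finite A" using A fX finite_subset by blast
    have fXA: "finite (X - A)" using fX by simp
    have "card A < card X" using A fX by (simp add: psubset_card_mono)
    moreover have "card (X - A) < card X"
    proof -
      have "0 < card A" "card A \<le> card X" using A fA fX by (auto simp: card_gt_0_iff intro: card_mono)
      moreover have "card (X - A) = card X - card A" using A fA by (simp add: card_Diff_subset)
      ultimately show ?thesis by linarith
    qed
    moreover have "sum a A \<le> sum a X" "sum a (X - A) \<le> sum a X"
      using A fX by (auto intro: sum_mono2)
    ultimately have smaller: "card A + sum a A < card X + sum a X"
      "card (X - A) + sum a (X - A) < card X + sum a X" by linarith+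
    obtain f where f: "is_transport A Y a b m f"
      using less.hyps[OF smaller(1) fA fY gale_condition_subset[OF gale]] A by blast
    obtain g where "is_transport (X - A) Y a (\<lambda>y. b y - (\<Sum>x\<in>A. f x y)) m g"
      using less.hyps[OF smaller(2) fXA fY gale_condition_residual[OF fX fY gale _ tight f]] A by blast
    then have "is_transport (A \<union> (X - A)) Y a b m (\<lambda>x y. if x \<in> A then f x y else g x y)"
      using is_transport_union[OF fA fXA _ f] by blast
    then show ?thesis using A by (metis Diff_partition psubset_imp_subset)
  next
    case no_tight: False
    show ?thesis
    proof (cases "sum a X = 0")
      case True
      then have "\<forall>x\<in>X. a x = 0" using fX by simp
      then show ?thesis using is_transport_zero by blast
    next
      case False
      then have "\<exists>x\<in>X. a x \<noteq> 0" by (meson sum.neutral)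
      then obtain x0 where x0: "x0 \<in> X" "0 < a x0" by blast
      have "0 < (\<Sum>y\<in>Y. min (b y) (m x0 y))"
        using gale_conditionD[OF gale, of "{x0}"] x0 by simp
      then obtain y0 where y0: "y0 \<in> Y" "0 < b y0" "0 < m x0 y0"
        using sum.neutral[of Y "\<lambda>y. min (b y) (m x0 y)"] by fastforce
      have slack: "(\<Sum>x\<in>A. a x) < (\<Sum>y\<in>Y. min (b y) (\<Sum>x\<in>A. m x y))"
        if "A \<noteq> {}" "A \<subset> X" for A
      proof -
        have "(\<Sum>x\<in>A. a x) \<le> (\<Sum>y\<in>Y. min (b y) (\<Sum>x\<in>A. m x y))"
          using gale_conditionD[OF gale] that by blast
        moreover have "(\<Sum>x\<in>A. a x) \<noteq> (\<Sum>y\<in>Y. min (b y) (\<Sum>x\<in>A. m x y))"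
          using no_tight that by blast
        ultimately show ?thesis by simp
      qed
      have "sum (a(x0 := a x0 - 1)) X < sum a X"
        using fX x0 by (simp add: sum.remove)
      then have "card X + sum (a(x0 := a x0 - 1)) X < card X + sum a X" by simp
      from less.hyps[OF this fX fY gale_condition_decrement[OF fX fY gale x0 y0 slack]]
      show ?thesis using is_transport_increment[where a = a and b = b and m = m, OF fX fY x0 y0] by blast
    qed
  qed
qed

lemma gale_condition_regular:
  fixes m :: "'a \<Rightarrow> 'b \<Rightarrow> nat" and c :: "'b \<Rightarrow> nat"
  assumes fS: "finite S" and t: "0 < t"
    and deg_left: "\<forall>x\<in>S. (\<Sum>v\<in>T. m x v) = t"
    and deg_right: "\<forall>v\<in>T. (\<Sum>x\<in>S. m x v) = t * c v"
  shows "gale_condition S T (\<lambda>_. 1) c m"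
  unfolding gale_condition_def
proof (intro allI impI)
  fix A assume A: "A \<subseteq> S"
  have "t * (\<Sum>x\<in>A. 1) = (\<Sum>x\<in>A. \<Sum>v\<in>T. m x v)" using deg_left A by (simp add: subset_iff)
  also have "\<dots> = (\<Sum>v\<in>T. \<Sum>x\<in>A. m x v)" by (rule sum.swap)
  also have "\<dots> \<le> (\<Sum>v\<in>T. t * min (c v) (\<Sum>x\<in>A. m x v))"
  proof (rule sum_mono)
    fix v assume v: "v \<in> T"
    have "(\<Sum>x\<in>A. m x v) \<le> (\<Sum>x\<in>S. m x v)" using A fS by (intro sum_mono2) auto
    then show "(\<Sum>x\<in>A. m x v) \<le> t * min (c v) (\<Sum>x\<in>A. m x v)"
      using deg_right v t by (simp add: min_def)
  qed
  also have "\<dots> = t * (\<Sum>v\<in>T. min (c v) (\<Sum>x\<in>A. m x v))" by (simp add: sum_distrib_left)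
  finally show "(\<Sum>x\<in>A. 1) \<le> (\<Sum>v\<in>T. min (c v) (\<Sum>x\<in>A. m x v))" using t by simp
qed

text \<open>A transport with supply 1 is a 0-1 matrix with a single 1 in every row; g records its column.\<close>
lemma regular_assignment_exists:
  fixes m :: "'a \<Rightarrow> 'b \<Rightarrow> nat" and c :: "'b \<Rightarrow> nat"
  assumes fS: "finite S" and fT: "finite T" and t: "0 < t"
    and deg_left: "\<forall>x\<in>S. (\<Sum>v\<in>T. m x v) = t"
    and deg_right: "\<forall>v\<in>T. (\<Sum>x\<in>S. m x v) = t * c v"
  shows "\<exists>g. (\<forall>x\<in>S. g x \<in> T \<and> 0 < m x (g x)) \<and> (\<forall>v\<in>T. card {x\<in>S. g x = v} = c v)"
proof -
  obtain f where "is_transport S T (\<lambda>_. 1) c m f"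
    using gale_transport_exists[OF fS fT gale_condition_regular[OF fS t deg_left deg_right]] by blast
  then have f_le: "\<forall>x v. f x v \<le> m x v" and f_row: "\<forall>x\<in>S. (\<Sum>v\<in>T. f x v) = 1"
    and f_col: "\<forall>v\<in>T. (\<Sum>x\<in>S. f x v) \<le> c v"
    unfolding is_transport_def by auto
  have "\<exists>v. v \<in> T \<and> 0 < f x v" if "x \<in> S" for x
  proof (rule ccontr)
    assume "\<not> ?thesis"
    then have "(\<Sum>v\<in>T. f x v) = 0" by (intro sum.neutral) auto
    then show False using f_row that by simp
  qed
  then obtain g where g: "\<And>x. x \<in> S \<Longrightarrow> g x \<in> T \<and> 0 < f x (g x)"
    by metis
  have f_eq: "f x v = (if g x = v then 1 else 0)" if "x \<in> S" "v \<in> T" for x v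
    using sum_eq_1_indicator[OF fT f_row[rule_format, OF that(1)] conjunct1[OF g] conjunct2[OF g] that(2)]
      that(1) by (simp add: eq_commute)
  have col_eq: "card {x\<in>S. g x = v} = (\<Sum>x\<in>S. f x v)" if "v \<in> T" for v
    unfolding card_filter_sum[OF fS] using f_eq that by (intro sum.cong) auto
  have "(\<Sum>v\<in>T. \<Sum>x\<in>S. f x v) = (\<Sum>x\<in>S. \<Sum>v\<in>T. f x v)" by (rule sum.swap)
  then have "(\<Sum>v\<in>T. \<Sum>x\<in>S. f x v) = card S" using f_row by simp
  moreover have "t * (\<Sum>v\<in>T. c v) = t * card S"
  proof -
    have "t * (\<Sum>v\<in>T. c v) = (\<Sum>v\<in>T. \<Sum>x\<in>S. m x v)"
      using deg_right by (simp add: sum_distrib_left)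
    also have "\<dots> = (\<Sum>x\<in>S. \<Sum>v\<in>T. m x v)" by (rule sum.swap)
    also have "\<dots> = t * card S" using deg_left by simp
    finally show ?thesis .
  qed
  ultimately have "\<forall>v\<in>T. (\<Sum>x\<in>S. f x v) = c v"
    using sum_mono_inv[of "\<lambda>v. \<Sum>x\<in>S. f x v" T c] f_col fT t by auto
  moreover have "0 < m x (g x)" if "x \<in> S" for x
    using g[OF that] f_le order_less_le_trans by blast
  ultimately show ?thesis using g col_eq by (intro exI[of _ g]) auto
qed

section \<open>Latin rectangles\<close>

definition latin_rect :: "nat \<Rightarrow> nat \<Rightarrow> nat \<Rightarrow> (nat \<Rightarrow> nat \<Rightarrow> nat) \<Rightarrow> bool" where
  "latin_rect k r s L \<longleftrightarrow>
     (\<forall>i\<in>{1..r}. \<forall>j\<in>{1..s}. L i j \<in> {1..k}) \<and>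
     (\<forall>i\<in>{1..r}. inj_on (\<lambda>j. L i j) {1..s}) \<and>
     (\<forall>j\<in>{1..s}. inj_on (\<lambda>i. L i j) {1..r})"

lemma rho_latin_rectangle_iff:
  "rho_latin_rectangle k rho r s L \<longleftrightarrow> latin_rect k r s L \<and> (\<forall>l\<in>{1..k}. occ r s L l \<le> rho l)"
  unfolding rho_latin_rectangle_def latin_rect_def by blast

lemma rho_latin_square_iff:
  "rho_latin_square k rho n M \<longleftrightarrow> latin_rect k n n M \<and> (\<forall>l\<in>{1..k}. occ n n M l = rho l)"
  unfolding rho_latin_square_def latin_rect_def by blast

lemma latin_rect_transpose:
  "latin_rect k r s L \<Longrightarrow> latin_rect k s r (\<lambda>i j. L j i)"
  unfolding latin_rect_def by blast

lemma latin_rect_add_column: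
  assumes L: "latin_rect k r s L"
    and p: "\<forall>i\<in>{1..r}. p i \<in> {1..k} \<and> p i \<notin> (\<lambda>j. L i j) ` {1..s}" "inj_on p {1..r}"
  shows "latin_rect k r (Suc s) (\<lambda>i j. if j = Suc s then p i else L i j)"
  unfolding latin_rect_def
proof (intro conjI ballI)
  fix i j assume "i \<in> {1..r}" "j \<in> {1..Suc s}"
  then show "(if j = Suc s then p i else L i j) \<in> {1..k}"
    using L p unfolding latin_rect_def by (auto simp: le_Suc_eq)
next
  fix i assume i: "i \<in> {1..r}"
  have "inj_on (\<lambda>j. L i j) {1..s}" using L i unfolding latin_rect_def by blast
  then have "inj_on (\<lambda>j. if j = Suc s then p i else L i j) {1..s}"
    by (rule inj_on_cong[THEN iffD1, rotated]) auto
  moreover have "(if Suc s = Suc s then p i else L i (Suc s)) \<notin> (\<lambda>j. if j = Suc s then p i else L i j) ` {1..s}"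
    using p i by auto
  moreover have "{1..Suc s} = insert (Suc s) {1..s}" by auto
  ultimately show "inj_on (\<lambda>j. if j = Suc s then p i else L i j) {1..Suc s}" by simp
next
  fix j assume "j \<in> {1..Suc s}"
  then show "inj_on (\<lambda>i. if j = Suc s then p i else L i j) {1..r}"
    using L p unfolding latin_rect_def by (cases "j = Suc s") (auto simp: le_Suc_eq)
qed

lemma occ_cong:
  "\<forall>i\<in>{1..r}. \<forall>j\<in>{1..s}. L' i j = L i j \<Longrightarrow> occ r s L' l = occ r s L l"
  unfolding occ_def by (rule arg_cong[where f = card]) auto

lemma occ_transpose: "occ s r (\<lambda>i j. L j i) l = occ r s L l"
proof -
  have "{(i, j). i \<in> {1..s} \<and> j \<in> {1..r} \<and> L j i = l}
      = prod.swap ` {(i, j). i \<in> {1..r} \<and> j \<in> {1..s} \<and> L i j = l}"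
    by auto
  then show ?thesis unfolding occ_def by (simp add: card_image)
qed

lemma occ_Suc_column:
  "occ r (Suc s) L l = occ r s L l + card {i\<in>{1..r}. L i (Suc s) = l}"
proof -
  let ?S = "{(i, j). i \<in> {1..r} \<and> j \<in> {1..s} \<and> L i j = l}"
  let ?T = "(\<lambda>i. (i, Suc s)) ` {i\<in>{1..r}. L i (Suc s) = l}"
  have "{(i, j). i \<in> {1..r} \<and> j \<in> {1..Suc s} \<and> L i j = l} = ?S \<union> ?T"
    by (auto simp: le_Suc_eq)
  moreover have "finite ?S" by (rule finite_subset[of _ "{1..r} \<times> {1..s}"]) auto
  moreover have "?S \<inter> ?T = {}" by auto
  moreover have "card ?T = card {i\<in>{1..r}. L i (Suc s) = l}" by (rule card_image) (simp add: inj_on_def)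
  ultimately show ?thesis unfolding occ_def by (simp add: card_Un_disjoint)
qed

lemma occ_add_column:
  assumes "inj_on p {1..r}"
  shows "occ r (Suc s) (\<lambda>i j. if j = Suc s then p i else L i j) l
       = occ r s L l + (if l \<in> p ` {1..r} then 1 else 0)"
  using occ_Suc_column[of r s "\<lambda>i j. if j = Suc s then p i else L i j" l]
    occ_cong[of r s "\<lambda>i j. if j = Suc s then p i else L i j" L l] card_preimage_inj_on[OF assms, of l]
  by simp

lemma sum_occ:
  assumes "\<forall>i\<in>{1..r}. \<forall>j\<in>{1..s}. L i j \<in> {1..k}"
  shows "(\<Sum>l\<in>{1..k}. occ r s L l) = r * s"
proof -
  have "{(i, j). i \<in> {1..r} \<and> j \<in> {1..s} \<and> L i j = l}
      = {x\<in>{1..r} \<times> {1..s}. (case x of (i, j) \<Rightarrow> L i j) = l}" for l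
    by auto
  then have "(\<Sum>l\<in>{1..k}. occ r s L l) = (\<Sum>l\<in>{1..k}. card {x\<in>{1..r} \<times> {1..s}. (case x of (i, j) \<Rightarrow> L i j) = l})"
    unfolding occ_def by simp
  also have "\<dots> = card ({1..r} \<times> {1..s})"
    by (rule sum_card_fibres) (use assms in auto)
  finally show ?thesis by simp
qed

section \<open>Outlines\<close>

definition row_extension ::
  "nat \<Rightarrow> nat \<Rightarrow> nat \<Rightarrow> nat \<Rightarrow> (nat \<Rightarrow> nat \<Rightarrow> nat) \<Rightarrow> (nat \<Rightarrow> nat set) \<Rightarrow> bool" where
  "row_extension k t r s L R \<longleftrightarrow>
     (\<forall>i\<in>{1..r}. R i \<subseteq> {1..k} \<and> card (R i) = t \<and> (\<forall>j\<in>{1..s}. L i j \<notin> R i))"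

definition set_count :: "nat \<Rightarrow> (nat \<Rightarrow> nat set) \<Rightarrow> nat \<Rightarrow> nat" where
  "set_count r R l = card {i\<in>{1..r}. l \<in> R i}"

lemma sum_set_count:
  assumes "row_extension k t r s L R"
  shows "(\<Sum>l\<in>{1..k}. set_count r R l) = r * t"
proof -
  have "(\<Sum>l\<in>{1..k}. set_count r R l) = (\<Sum>i\<in>{1..r}. card {l\<in>{1..k}. l \<in> R i})"
    unfolding set_count_def by (rule sum_card_filter_swap) auto
  also have "\<dots> = (\<Sum>i\<in>{1..r}. t)"
  proof (rule sum.cong)
    fix i assume "i \<in> {1..r}"
    then have "R i \<subseteq> {1..k}" "card (R i) = t" using assms unfolding row_extension_def by auto
    moreover from this have "{l\<in>{1..k}. l \<in> R i} = R i" by auto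
    ultimately show "card {l\<in>{1..k}. l \<in> R i} = t" by simp
  qed simp
  finally show ?thesis by simp
qed

lemma set_count_remove:
  assumes "\<forall>i\<in>{1..r}. p i \<in> R i" "inj_on p {1..r}"
  shows "set_count r (\<lambda>i. R i - {p i}) l + (if l \<in> p ` {1..r} then 1 else 0) = set_count r R l"
proof -
  have "{i\<in>{1..r}. l \<in> R i} = {i\<in>{1..r}. l \<in> R i - {p i}} \<union> {i\<in>{1..r}. p i = l}"
    using assms(1) by auto
  moreover have "{i\<in>{1..r}. l \<in> R i - {p i}} \<inter> {i\<in>{1..r}. p i = l} = {}" by auto
  ultimately show ?thesis
    unfolding set_count_def using card_preimage_inj_on[OF assms(2), of l]
    by (simp add: card_Un_disjoint)
qed

lemma set_count_update:
  "set_count (Suc s) (C(Suc s := Z)) l = set_count s C l + (if l \<in> Z then 1 else 0)"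
proof -
  have "{j\<in>{1..Suc s}. l \<in> (C(Suc s := Z)) j} = {j\<in>{1..s}. l \<in> C j} \<union> (if l \<in> Z then {Suc s} else {})"
    by (auto simp: le_Suc_eq)
  then show ?thesis unfolding set_count_def by simp
qed

lemma row_extension_add_column:
  assumes R: "row_extension k t r s L R" and p: "\<forall>i\<in>{1..r}. p i \<in> R i"
  shows "row_extension k (t - 1) r (Suc s) (\<lambda>i j. if j = Suc s then p i else L i j) (\<lambda>i. R i - {p i})"
  unfolding row_extension_def
proof (rule ballI)
  fix i assume i: "i \<in> {1..r}"
  then have "R i \<subseteq> {1..k}" "card (R i) = t" "\<forall>j\<in>{1..s}. L i j \<notin> R i"
    using R unfolding row_extension_def by auto
  moreover from this have "finite (R i)" using finite_subset by blast
  ultimately show "R i - {p i} \<subseteq> {1..k} \<and> card (R i - {p i}) = t - 1 \<and>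
    (\<forall>j\<in>{1..Suc s}. (if j = Suc s then p i else L i j) \<notin> R i - {p i})"
    using p i by (auto simp: le_Suc_eq)
qed

lemma row_extension_add_row:
  assumes C: "row_extension k t s r M C" and agree: "\<forall>i\<in>{1..s}. \<forall>j\<in>{1..r}. M' i j = M i j"
    and Z: "Z \<subseteq> {1..k}" "card Z = t" "\<forall>j\<in>{1..r}. M' (Suc s) j \<notin> Z"
  shows "row_extension k t (Suc s) r M' (C(Suc s := Z))"
  using assms unfolding row_extension_def by (auto simp: le_Suc_eq)

text \<open>An outline of a partial completion of the r \<times> s rectangle L: R i is the set of symbols
  still to be placed in row i (right of column s), C j the set of symbols still to be placed in
  column j (below row r), and w l the number of copies of l in the lower right
  (n - r) \<times> (n - s) block.\<close>
definition outline ::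
  "nat \<Rightarrow> nat \<Rightarrow> (nat \<Rightarrow> nat) \<Rightarrow> nat \<Rightarrow> nat \<Rightarrow> (nat \<Rightarrow> nat \<Rightarrow> nat)
     \<Rightarrow> (nat \<Rightarrow> nat set) \<Rightarrow> (nat \<Rightarrow> nat set) \<Rightarrow> (nat \<Rightarrow> nat) \<Rightarrow> bool" where
  "outline n k rho r s L R C w \<longleftrightarrow>
     r \<le> n \<and> s \<le> n \<and> n \<le> k \<and> latin_rect k r s L \<and>
     row_extension k (n - s) r s L R \<and> row_extension k (n - r) s r (\<lambda>i j. L j i) C \<and>
     (\<forall>l\<in>{1..k}. set_count r R l + w l \<le> n - s \<and> set_count s C l + w l \<le> n - r \<and>
        occ r s L l + set_count r R l + set_count s C l + w l = rho l) \<and>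
     (\<Sum>l\<in>{1..k}. w l) = (n - r) * (n - s)"

lemma outline_transpose:
  "outline n k rho r s L R C w \<Longrightarrow> outline n k rho s r (\<lambda>i j. L j i) C R w"
  unfolding outline_def using latin_rect_transpose[of k r s L] occ_transpose[of s r L]
  by (simp add: ac_simps)

lemma outline_square:
  "outline n k rho n n L R C w \<Longrightarrow> rho_latin_square k rho n L"
  unfolding outline_def rho_latin_square_iff by auto

lemma sum_outline_slack:
  assumes O: "outline n k rho r s L R C w"
  shows "(\<Sum>l\<in>{1..k}. (n - s) - (set_count r R l + w l)) = (n - s) * (k - n)"
proof -
  have R: "row_extension k (n - s) r s L R" and rn: "r \<le> n" "n \<le> k"
    and cnt: "\<forall>l\<in>{1..k}. set_count r R l + w l \<le> n - s"
    and sum_w: "(\<Sum>l\<in>{1..k}. w l) = (n - r) * (n - s)"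
    using O unfolding outline_def by auto
  have "(\<Sum>l\<in>{1..k}. (n - s) - (set_count r R l + w l))
      = (\<Sum>l\<in>{1..k}. n - s) - (\<Sum>l\<in>{1..k}. set_count r R l + w l)"
    by (rule sum_subtractf_nat) (use cnt in blast)
  also have "\<dots> = k * (n - s) - (r * (n - s) + (n - r) * (n - s))"
    using sum_set_count[OF R] sum_w by (simp add: sum.distrib)
  also have "r * (n - s) + (n - r) * (n - s) = n * (n - s)"
    using rn by (simp add: add_mult_distrib[symmetric])
  also have "k * (n - s) - n * (n - s) = (n - s) * (k - n)"
    by (simp add: diff_mult_distrib2 mult.commute[of "n - s"])
  finally show ?thesis .
qed

text \<open>The new column s + 1 is chosen by a regular assignment of the k symbols to the vertices
  0, 1, ..., r, r + 1, each symbol l carrying n - s units: one to every row i with l \<in> R i,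
  w l to vertex 0 (the part of the column below row r) and the rest to the dummy vertex r + 1.
  Vertex 0 receives (n - r)(n - s) units, each row n - s and the dummy (k - n)(n - s).\<close>
lemma outline_column_assignment:
  assumes O: "outline n k rho r s L R C w" and sn: "s < n"
  obtains g where "\<forall>l\<in>{1..k}. g l \<le> Suc r" "card {l\<in>{1..k}. g l = 0} = n - r"
    "\<forall>i\<in>{1..r}. card {l\<in>{1..k}. g l = i} = 1"
    "\<forall>l\<in>{1..k}. g l = 0 \<longrightarrow> 0 < w l"
    "\<forall>l\<in>{1..k}. g l \<in> {1..r} \<longrightarrow> l \<in> R (g l)"
    "\<forall>l\<in>{1..k}. g l = Suc r \<longrightarrow> set_count r R l + w l < n - s"
proof -
  define t where "t = n - s"
  have R: "row_extension k t r s L R"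
    and cnt: "\<forall>l\<in>{1..k}. set_count r R l + w l \<le> t" and sum_w: "(\<Sum>l\<in>{1..k}. w l) = (n - r) * t"
    using O unfolding outline_def t_def by auto
  define m where "m l v = (if v = 0 then w l else if v = Suc r then t - (set_count r R l + w l)
                           else if l \<in> R v then 1 else 0)" for l v
  define c where "c v = (if v = 0 then n - r else if v = Suc r then k - n else 1)" for v :: nat
  have V: "{0..Suc r} = insert 0 (insert (Suc r) {1..r})" by auto
  have row_deg: "(\<Sum>l\<in>{1..k}. if l \<in> R i then 1 else 0) = t" if "i \<in> {1..r}" for i
  proof -
    have "R i \<subseteq> {1..k}" "card (R i) = t" using R that unfolding row_extension_def by auto
    then show ?thesis by (simp add: sum.If_cases Int_absorb1)
  qed
  have "\<forall>l\<in>{1..k}. (\<Sum>v\<in>{0..Suc r}. m l v) = t"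
  proof
    fix l assume l: "l \<in> {1..k}"
    have "(\<Sum>v\<in>{1..r}. m l v) = set_count r R l"
      unfolding set_count_def card_filter_sum[OF finite_atLeastAtMost] m_def by (intro sum.cong) auto
    moreover have "(\<Sum>v\<in>{0..Suc r}. m l v) = m l 0 + (m l (Suc r) + (\<Sum>v\<in>{1..r}. m l v))"
      unfolding V by simp
    moreover have "m l 0 = w l" "m l (Suc r) = t - (set_count r R l + w l)"
      unfolding m_def by simp_all
    moreover have "set_count r R l + w l \<le> t" using cnt l by blast
    ultimately show "(\<Sum>v\<in>{0..Suc r}. m l v) = t" by linarith
  qed
  moreover have "\<forall>v\<in>{0..Suc r}. (\<Sum>l\<in>{1..k}. m l v) = t * c v"
  proof
    fix v assume "v \<in> {0..Suc r}"
    then consider "v = 0" | "v = Suc r" | "v \<in> {1..r}" by fastforce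
    then show "(\<Sum>l\<in>{1..k}. m l v) = t * c v"
    proof cases
      case 1
      then show ?thesis using sum_w unfolding m_def c_def by (simp add: mult.commute)
    next
      case 2
      then show ?thesis using sum_outline_slack[OF O] unfolding m_def c_def t_def by simp
    next
      case 3
      then show ?thesis using row_deg unfolding m_def c_def by auto
    qed
  qed
  ultimately obtain g where g: "\<forall>l\<in>{1..k}. g l \<in> {0..Suc r} \<and> 0 < m l (g l)"
    and fibres: "\<forall>v\<in>{0..Suc r}. card {l\<in>{1..k}. g l = v} = c v"
    using regular_assignment_exists[of "{1..k}" "{0..Suc r}" t m c] sn t_def by auto
  have m_pos: "0 < m l (g l)" if "l \<in> {1..k}" for l using g that by blast
  show thesis
  proof
    show "\<forall>l\<in>{1..k}. g l \<le> Suc r" using g by auto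
    show "card {l\<in>{1..k}. g l = 0} = n - r" "\<forall>i\<in>{1..r}. card {l\<in>{1..k}. g l = i} = 1"
      using fibres unfolding c_def by auto
    show "\<forall>l\<in>{1..k}. g l = 0 \<longrightarrow> 0 < w l"
    proof (intro ballI impI)
      fix l assume "l \<in> {1..k}" "g l = 0"
      then show "0 < w l" using m_pos[of l] unfolding m_def by simp
    qed
    show "\<forall>l\<in>{1..k}. g l \<in> {1..r} \<longrightarrow> l \<in> R (g l)"
    proof (intro ballI impI)
      fix l assume "l \<in> {1..k}" "g l \<in> {1..r}"
      moreover from this have "g l \<noteq> 0" "g l \<noteq> Suc r" by auto
      ultimately show "l \<in> R (g l)" using m_pos[of l] unfolding m_def by (simp split: if_splits)
    qed
    show "\<forall>l\<in>{1..k}. g l = Suc r \<longrightarrow> set_count r R l + w l < n - s"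
    proof (intro ballI impI)
      fix l assume "l \<in> {1..k}" "g l = Suc r"
      then show "set_count r R l + w l < n - s" using m_pos[of l] unfolding m_def t_def by simp
    qed
  qed
qed

lemma outline_column_choice:
  assumes "outline n k rho r s L R C w" and "s < n"
  obtains p Z where "\<forall>i\<in>{1..r}. p i \<in> R i" "inj_on p {1..r}"
    "Z \<subseteq> {1..k}" "card Z = n - r" "\<forall>l\<in>Z. 0 < w l" "p ` {1..r} \<inter> Z = {}"
    "\<forall>l\<in>{1..k} - Z - p ` {1..r}. set_count r R l + w l < n - s"
proof -
  obtain g where g_range: "\<forall>l\<in>{1..k}. g l \<le> Suc r"
    and fibre_0: "card {l\<in>{1..k}. g l = 0} = n - r"
    and fibre_row: "\<forall>i\<in>{1..r}. card {l\<in>{1..k}. g l = i} = 1"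
    and g_0: "\<forall>l\<in>{1..k}. g l = 0 \<longrightarrow> 0 < w l"
    and g_row: "\<forall>l\<in>{1..k}. g l \<in> {1..r} \<longrightarrow> l \<in> R (g l)"
    and g_dummy: "\<forall>l\<in>{1..k}. g l = Suc r \<longrightarrow> set_count r R l + w l < n - s"
    using outline_column_assignment[OF assms] by blast
  have "\<forall>i\<in>{1..r}. \<exists>l. {l'\<in>{1..k}. g l' = i} = {l}"
  proof
    fix i assume "i \<in> {1..r}"
    then have "card {l'\<in>{1..k}. g l' = i} = 1" using fibre_row by blast
    then obtain l where "{l'\<in>{1..k}. g l' = i} = {l}" by (rule card_1_singletonE)
    then show "\<exists>l. {l'\<in>{1..k}. g l' = i} = {l}" ..
  qed
  from bchoice[OF this] obtain p where p_fibre: "\<forall>i\<in>{1..r}. {l\<in>{1..k}. g l = i} = {p i}" ..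
  have p: "l \<in> {1..k} \<and> g l = i \<longleftrightarrow> l = p i" if "i \<in> {1..r}" for i l
    using arg_cong[where f = "\<lambda>A. l \<in> A", OF p_fibre[rule_format, OF that]] by simp
  have g_p: "p i \<in> {1..k}" "g (p i) = i" if "i \<in> {1..r}" for i
    using p[OF that, of "p i"] by simp_all
  define Z where "Z = {l\<in>{1..k}. g l = 0}"
  have P: "p ` {1..r} = {l\<in>{1..k}. g l \<in> {1..r}}"
  proof
    show "p ` {1..r} \<subseteq> {l\<in>{1..k}. g l \<in> {1..r}}" using g_p by auto
    show "{l\<in>{1..k}. g l \<in> {1..r}} \<subseteq> p ` {1..r}"
    proof
      fix l assume l: "l \<in> {l\<in>{1..k}. g l \<in> {1..r}}"
      then have "l = p (g l)" using p by blast
      then show "l \<in> p ` {1..r}" using l by blast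
    qed
  qed
  show thesis
  proof
    show "\<forall>i\<in>{1..r}. p i \<in> R i"
    proof
      fix i assume i: "i \<in> {1..r}"
      show "p i \<in> R i" using g_row[rule_format, OF g_p(1)[OF i]] g_p(2)[OF i] i by simp
    qed
    show "inj_on p {1..r}" by (rule inj_onI) (metis g_p(2))
    show "Z \<subseteq> {1..k}" unfolding Z_def by auto
    show "card Z = n - r" unfolding Z_def by (rule fibre_0)
    show "\<forall>l\<in>Z. 0 < w l" using g_0 unfolding Z_def by auto
    show "p ` {1..r} \<inter> Z = {}" unfolding P Z_def by auto
    show "\<forall>l\<in>{1..k} - Z - p ` {1..r}. set_count r R l + w l < n - s"
    proof
      fix l assume "l \<in> {1..k} - Z - p ` {1..r}"
      then have "l \<in> {1..k}" "g l = Suc r" using g_range unfolding P Z_def by (auto simp: le_Suc_eq)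
      then show "set_count r R l + w l < n - s" using g_dummy by blast
    qed
  qed
qed

lemma outline_add_column:
  assumes O: "outline n k rho r s L R C w" and sn: "s < n"
    and p: "\<forall>i\<in>{1..r}. p i \<in> R i" "inj_on p {1..r}"
    and Z: "Z \<subseteq> {1..k}" "card Z = n - r" "\<forall>l\<in>Z. 0 < w l" "p ` {1..r} \<inter> Z = {}"
    and slack: "\<forall>l\<in>{1..k} - Z - p ` {1..r}. set_count r R l + w l < n - s"
  shows "outline n k rho r (Suc s) (\<lambda>i j. if j = Suc s then p i else L i j) (\<lambda>i. R i - {p i})
           (C(Suc s := Z)) (\<lambda>l. if l \<in> Z then w l - 1 else w l)"
    (is "outline n k rho r (Suc s) ?L ?R ?C ?w")
proof -
  have L: "latin_rect k r s L" and R: "row_extension k (n - s) r s L R"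
    and C: "row_extension k (n - r) s r (\<lambda>i j. L j i) C"
    and cnt: "\<forall>l\<in>{1..k}. set_count r R l + w l \<le> n - s \<and> set_count s C l + w l \<le> n - r \<and>
        occ r s L l + set_count r R l + set_count s C l + w l = rho l"
    and sum_w: "(\<Sum>l\<in>{1..k}. w l) = (n - r) * (n - s)" and rn: "r \<le> n" "n \<le> k"
    using O unfolding outline_def by auto
  have "\<forall>i\<in>{1..r}. p i \<in> {1..k} \<and> p i \<notin> (\<lambda>j. L i j) ` {1..s}"
  proof
    fix i assume i: "i \<in> {1..r}"
    then have "R i \<subseteq> {1..k}" "\<forall>j\<in>{1..s}. L i j \<notin> R i" "p i \<in> R i"
      using R p(1) unfolding row_extension_def by auto
    then show "p i \<in> {1..k} \<and> p i \<notin> (\<lambda>j. L i j) ` {1..s}" by auto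
  qed
  then have "latin_rect k r (Suc s) ?L" using latin_rect_add_column[OF L _ p(2)] by blast
  moreover have "n - s - 1 = n - Suc s" by simp
  then have "row_extension k (n - Suc s) r (Suc s) ?L ?R"
    using row_extension_add_column[OF R p(1)] by metis
  moreover have "row_extension k (n - r) (Suc s) r (\<lambda>i j. ?L j i) ?C"
    using Z p(1) by (intro row_extension_add_row[OF C]) auto
  moreover have "set_count r ?R l + ?w l \<le> n - Suc s \<and> set_count (Suc s) ?C l + ?w l \<le> n - r \<and>
      occ r (Suc s) ?L l + set_count r ?R l + set_count (Suc s) ?C l + ?w l = rho l"
    if l: "l \<in> {1..k}" for l
  proof -
    have "l \<notin> Z \<Longrightarrow> l \<notin> p ` {1..r} \<Longrightarrow> set_count r R l + w l < n - s" using slack l by blast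
    then show ?thesis
      using set_count_remove[OF p, of l] set_count_update[of s C Z l] occ_add_column[OF p(2), of s L l]
        cnt[rule_format, OF l] Z(3,4) by (auto split: if_splits)
  qed
  moreover have "(\<Sum>l\<in>{1..k}. ?w l) = (n - r) * (n - Suc s)"
  proof -
    have "(\<Sum>l\<in>{1..k}. w l) = (\<Sum>l\<in>{1..k}. ?w l + (if l \<in> Z then 1 else 0))"
      using Z(3) by (intro sum.cong) auto
    also have "\<dots> = (\<Sum>l\<in>{1..k}. ?w l) + (\<Sum>l\<in>{1..k}. if l \<in> Z then 1 else 0)"
      by (rule sum.distrib)
    also have "(\<Sum>l\<in>{1..k}. if l \<in> Z then 1 else 0) = card {l\<in>{1..k}. l \<in> Z}"
      by (rule card_filter_sum[symmetric]) simp
    also have "{l\<in>{1..k}. l \<in> Z} = Z" using Z(1) by blast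
    finally have "(\<Sum>l\<in>{1..k}. ?w l) + (n - r) = (n - r) * (n - s)" using sum_w Z(2) by simp
    moreover have "n - s = Suc (n - Suc s)" using sn by simp
    ultimately show ?thesis by simp
  qed
  ultimately show ?thesis using rn sn unfolding outline_def by auto
qed

lemma outline_extend_column:
  assumes "outline n k rho r s L R C w" "s < n"
  shows "\<exists>L' R' C' w'. outline n k rho r (Suc s) L' R' C' w' \<and>
           (\<forall>i\<in>{1..r}. \<forall>j\<in>{1..s}. L' i j = L i j)"
proof -
  obtain p Z where "\<forall>i\<in>{1..r}. p i \<in> R i" "inj_on p {1..r}"
    "Z \<subseteq> {1..k}" "card Z = n - r" "\<forall>l\<in>Z. 0 < w l" "p ` {1..r} \<inter> Z = {}"
    "\<forall>l\<in>{1..k} - Z - p ` {1..r}. set_count r R l + w l < n - s"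
    using outline_column_choice[OF assms] by blast
  from outline_add_column[OF assms this] show ?thesis by fastforce
qed

text \<open>Columns are added until s = n, then rows via transposition.\<close>
theorem outline_completable:
  assumes "outline n k rho r s L R C w"
  shows "\<exists>M. rho_latin_square k rho n M \<and> (\<forall>i\<in>{1..r}. \<forall>j\<in>{1..s}. M i j = L i j)"
  using assms
proof (induction "(n - r) + (n - s)" arbitrary: r s L R C w rule: less_induct)
  case less
  have rn: "r \<le> n" and sn: "s \<le> n" using less.prems unfolding outline_def by auto
  consider "s < n" | "r < n" "s = n" | "r = n" "s = n" using rn sn by linarith
  then show ?case
  proof cases
    case 1
    then obtain L' R' C' w' where "outline n k rho r (Suc s) L' R' C' w'"
      and "\<forall>i\<in>{1..r}. \<forall>j\<in>{1..s}. L' i j = L i j"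
      using outline_extend_column[OF less.prems] by blast
    moreover have "(n - r) + (n - Suc s) < (n - r) + (n - s)" using 1 by simp
    ultimately show ?thesis using less.hyps by fastforce
  next
    case 2
    then obtain L' R' C' w' where O': "outline n k rho s (Suc r) L' R' C' w'"
      and agree: "\<forall>i\<in>{1..s}. \<forall>j\<in>{1..r}. L' i j = L j i"
      using outline_extend_column[OF outline_transpose[OF less.prems]] by blast
    have "(n - Suc r) + (n - s) < (n - r) + (n - s)" using 2 by simp
    from less.hyps[OF this outline_transpose[OF O']] obtain M where "rho_latin_square k rho n M"
      "\<forall>i\<in>{1..Suc r}. \<forall>j\<in>{1..s}. M i j = L' j i" by blast
    then show ?thesis using agree by auto
  next
    case 3
    then show ?thesis using less.prems outline_square by blast
  qed
qed

section \<open>The two conditions\<close>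

text \<open>Conditions (1) and (2) of the theorem, with b l in place of \<rho>_l - e_l.\<close>
definition cond_rows_cols ::
  "nat \<Rightarrow> nat \<Rightarrow> nat \<Rightarrow> nat \<Rightarrow> (nat \<Rightarrow> nat \<Rightarrow> nat) \<Rightarrow> (nat \<Rightarrow> nat) \<Rightarrow> bool" where
  "cond_rows_cols n k r s L b \<longleftrightarrow>
     (\<forall>I J. I \<subseteq> {1..r} \<longrightarrow> J \<subseteq> {1..s} \<longrightarrow>
        card I * (n - s) + card J * (n - r) \<le>
        (\<Sum>l\<in>{1..k}. min (b l) (mu_rows s L I l + mu_cols r L J l)))"

definition cond_rows_cols_symbols ::
  "nat \<Rightarrow> nat \<Rightarrow> nat \<Rightarrow> nat \<Rightarrow> (nat \<Rightarrow> nat \<Rightarrow> nat) \<Rightarrow> (nat \<Rightarrow> nat) \<Rightarrow> bool" where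
  "cond_rows_cols_symbols n k r s L b \<longleftrightarrow>
     (\<forall>I J K. I \<subseteq> {1..r} \<longrightarrow> J \<subseteq> {1..s} \<longrightarrow> K \<subseteq> {1..k} \<longrightarrow>
        (\<Sum>l\<in>K. b l) \<ge>
        (\<Sum>i\<in>I. (n - s) - mu_row s L ({1..k} - K) i) +
        (\<Sum>j\<in>J. (n - r) - mu_col r L ({1..k} - K) j))"

lemma sum_mu_row_swap:
  "finite I \<Longrightarrow> finite K \<Longrightarrow> (\<Sum>i\<in>I. mu_row s L K i) = (\<Sum>l\<in>K. mu_rows s L I l)"
  unfolding mu_row_def mu_rows_def by (rule sum_card_filter_swap[symmetric])

lemma sum_mu_col_swap:
  "finite J \<Longrightarrow> finite K \<Longrightarrow> (\<Sum>j\<in>J. mu_col r L K j) = (\<Sum>l\<in>K. mu_cols r L J l)"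
  unfolding mu_col_def mu_cols_def by (rule sum_card_filter_swap[symmetric])

text \<open>Apply (1) to the rows and columns whose truncated differences in (2) are positive and split
  its sum of minima at K.\<close>
lemma cond_rows_cols_imp_symbols:
  assumes "cond_rows_cols n k r s L b"
  shows "cond_rows_cols_symbols n k r s L b"
  unfolding cond_rows_cols_symbols_def
proof (intro allI impI)
  fix I J K assume I: "I \<subseteq> {1..r}" and J: "J \<subseteq> {1..s}" and K: "K \<subseteq> {1..k}"
  let ?K' = "{1..k} - K"
  define I' where "I' = {i\<in>I. mu_row s L ?K' i < n - s}"
  define J' where "J' = {j\<in>J. mu_col r L ?K' j < n - r}"
  have fin: "finite I" "finite J" using I J finite_subset by auto
  have I': "finite I'" "I' \<subseteq> {1..r}" and J': "finite J'" "J' \<subseteq> {1..s}"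
    using I J fin unfolding I'_def J'_def by auto
  have "(\<Sum>i\<in>I. (n - s) - mu_row s L ?K' i) = (\<Sum>i\<in>I'. (n - s) - mu_row s L ?K' i)"
    "(\<Sum>j\<in>J. (n - r) - mu_col r L ?K' j) = (\<Sum>j\<in>J'. (n - r) - mu_col r L ?K' j)"
    using fin unfolding I'_def J'_def by (auto intro: sum.mono_neutral_right)
  moreover have "(\<Sum>i\<in>I'. (n - s) - mu_row s L ?K' i) + (\<Sum>i\<in>I'. mu_row s L ?K' i) = card I' * (n - s)"
    "(\<Sum>j\<in>J'. (n - r) - mu_col r L ?K' j) + (\<Sum>j\<in>J'. mu_col r L ?K' j) = card J' * (n - r)"
     by (rule sum_diff_add_eq, simp add: I'_def J'_def)+
  moreover have "card I' * (n - s) + card J' * (n - r)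
      \<le> (\<Sum>l\<in>K. b l) + (\<Sum>l\<in>?K'. mu_rows s L I' l + mu_cols r L J' l)"
    using assms I' J' sum_min_le_split[OF finite_atLeastAtMost K] unfolding cond_rows_cols_def by (meson le_trans)
  moreover have "(\<Sum>l\<in>?K'. mu_rows s L I' l + mu_cols r L J' l)
      = (\<Sum>i\<in>I'. mu_row s L ?K' i) + (\<Sum>j\<in>J'. mu_col r L ?K' j)"
    using sum_mu_row_swap[OF I'(1)] sum_mu_col_swap[OF J'(1)] by (simp add: sum.distrib)
  ultimately show "(\<Sum>i\<in>I. (n - s) - mu_row s L ?K' i) + (\<Sum>j\<in>J. (n - r) - mu_col r L ?K' j)
      \<le> (\<Sum>l\<in>K. b l)" by linarith
qed

text \<open>Conversely, take K to be the set of symbols where the minimum in condition (1) is b l.\<close>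
lemma cond_symbols_imp_rows_cols:
  assumes "cond_rows_cols_symbols n k r s L b"
  shows "cond_rows_cols n k r s L b"
  unfolding cond_rows_cols_def
proof (intro allI impI)
  fix I J assume I: "I \<subseteq> {1..r}" and J: "J \<subseteq> {1..s}"
  define g where "g l = mu_rows s L I l + mu_cols r L J l" for l
  define K where "K = {l\<in>{1..k}. b l \<le> g l}"
  let ?K' = "{1..k} - K"
  have fin: "finite I" "finite J" using I J finite_subset by auto
  have "K \<subseteq> {1..k}" unfolding K_def by auto
  then have "(\<Sum>i\<in>I. (n - s) - mu_row s L ?K' i) + (\<Sum>j\<in>J. (n - r) - mu_col r L ?K' j) \<le> (\<Sum>l\<in>K. b l)"
    using assms I J unfolding cond_rows_cols_symbols_def by blast
  moreover have "(\<Sum>i\<in>I. mu_row s L ?K' i) + (\<Sum>j\<in>J. mu_col r L ?K' j) = (\<Sum>l\<in>?K'. g l)"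
    using sum_mu_row_swap[OF fin(1)] sum_mu_col_swap[OF fin(2)] unfolding g_def by (simp add: sum.distrib)
  moreover have "(\<Sum>l\<in>{1..k}. min (b l) (g l)) = (\<Sum>l\<in>K. b l) + (\<Sum>l\<in>?K'. g l)"
    unfolding K_def by (rule sum_min_eq_split) simp
  ultimately show "card I * (n - s) + card J * (n - r) \<le> (\<Sum>l\<in>{1..k}. min (b l) (mu_rows s L I l + mu_cols r L J l))"
    using sum_diff_add_ge[where c = "n - s" and f = "mu_row s L ?K'" and I = I]
      sum_diff_add_ge[where c = "n - r" and f = "mu_col r L ?K'" and I = J]
    unfolding g_def by linarith
qed

section \<open>Necessity\<close>

lemma mu_cols_eq_mu_rows_transpose: "mu_cols r L J l = mu_rows r (\<lambda>i j. L j i) J l"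
  unfolding mu_cols_def mu_rows_def ..

text \<open>The cells of a completion to the right of L in the rows I that carry l lie in distinct rows,
  none of which contains l inside L.\<close>
lemma card_cells_right_le_mu_rows:
  assumes M: "latin_rect k n n M" and agree: "\<forall>i\<in>{1..r}. \<forall>j\<in>{1..s}. M i j = L i j"
    and I: "I \<subseteq> {1..r}" and rn: "r \<le> n" and sn: "s \<le> n"
  shows "card {x\<in>I \<times> {Suc s..n}. M (fst x) (snd x) = l} \<le> mu_rows s L I l"
  unfolding mu_rows_def
proof (rule card_inj_on_le[of fst])
  have row_inj: "j = j'" if "i \<in> {1..n}" "j \<in> {1..n}" "j' \<in> {1..n}" "M i j = M i j'" for i j j'
    using M that unfolding latin_rect_def inj_on_def by blast
  show "inj_on fst {x\<in>I \<times> {Suc s..n}. M (fst x) (snd x) = l}"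
  proof (rule inj_onI)
    fix x y assume x: "x \<in> {x\<in>I \<times> {Suc s..n}. M (fst x) (snd x) = l}"
      and y: "y \<in> {x\<in>I \<times> {Suc s..n}. M (fst x) (snd x) = l}" and fst: "fst x = fst y"
    have "fst x \<in> {1..n}" using x I rn by auto
    moreover have "snd x \<in> {1..n}" "snd y \<in> {1..n}" "M (fst x) (snd x) = M (fst x) (snd y)"
      using x y fst by auto
    ultimately have "snd x = snd y" by (rule row_inj)
    then show "x = y" using fst by (simp add: prod_eq_iff)
  qed
  show "fst ` {x\<in>I \<times> {Suc s..n}. M (fst x) (snd x) = l} \<subseteq> {i\<in>I. \<forall>j\<in>{1..s}. L i j \<noteq> l}"
  proof
    fix i assume "i \<in> fst ` {x\<in>I \<times> {Suc s..n}. M (fst x) (snd x) = l}"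
    then obtain j where ij: "i \<in> I" "j \<in> {Suc s..n}" "M i j = l" by auto
    have "L i j' \<noteq> l" if j': "j' \<in> {1..s}" for j'
    proof
      assume "L i j' = l"
      then have "M i j' = l" using agree ij(1) I j' by auto
      moreover have "i \<in> {1..n}" "j \<in> {1..n}" "j' \<in> {1..n}" using ij(1,2) j' I rn sn by auto
      ultimately show False using row_inj[of i j j'] ij(2,3) j' by auto
    qed
    then show "i \<in> {i\<in>I. \<forall>j\<in>{1..s}. L i j \<noteq> l}" using ij(1) by blast
  qed
  have "finite I" using I finite_subset by blast
  then show "finite {i\<in>I. \<forall>j\<in>{1..s}. L i j \<noteq> l}" by simp
qed

lemma card_cells_below_le_mu_cols:
  assumes M: "latin_rect k n n M" and agree: "\<forall>i\<in>{1..r}. \<forall>j\<in>{1..s}. M i j = L i j"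
    and J: "J \<subseteq> {1..s}" and rn: "r \<le> n" and sn: "s \<le> n"
  shows "card {x\<in>{Suc r..n} \<times> J. M (fst x) (snd x) = l} \<le> mu_cols r L J l"
proof -
  have "{x\<in>{Suc r..n} \<times> J. M (fst x) (snd x) = l}
      = prod.swap ` {x\<in>J \<times> {Suc r..n}. M (snd x) (fst x) = l}" by auto
  then have "card {x\<in>{Suc r..n} \<times> J. M (fst x) (snd x) = l}
      = card {x\<in>J \<times> {Suc r..n}. M (snd x) (fst x) = l}" by (simp add: card_image)
  also have "\<dots> \<le> mu_cols r L J l"
    unfolding mu_cols_eq_mu_rows_transpose
    using agree by (intro card_cells_right_le_mu_rows[OF latin_rect_transpose[OF M] _ J sn rn]) auto
  finally show ?thesis .
qed

lemma card_cells_outside_le: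
  assumes agree: "\<forall>i\<in>{1..r}. \<forall>j\<in>{1..s}. M i j = L i j"
    and I: "I \<subseteq> {1..r}" and J: "J \<subseteq> {1..s}" and rn: "r \<le> n" and sn: "s \<le> n"
  shows "card {x\<in>I \<times> {Suc s..n}. M (fst x) (snd x) = l} + card {x\<in>{Suc r..n} \<times> J. M (fst x) (snd x) = l}
           + occ r s L l \<le> occ n n M l"
proof -
  let ?A = "{x\<in>I \<times> {Suc s..n}. M (fst x) (snd x) = l}"
  let ?B = "{x\<in>{Suc r..n} \<times> J. M (fst x) (snd x) = l}"
  let ?E = "{(i, j). i \<in> {1..r} \<and> j \<in> {1..s} \<and> L i j = l}"
  have "finite ?A" by (rule finite_subset[of _ "{1..r} \<times> {1..n}"]) (use I in auto)
  moreover have "finite ?B" by (rule finite_subset[of _ "{1..n} \<times> {1..s}"]) (use J in auto)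
  moreover have "finite ?E" by (rule finite_subset[of _ "{1..r} \<times> {1..s}"]) auto
  moreover have "?A \<inter> ?B = {}" "(?A \<union> ?B) \<inter> ?E = {}" using I J by auto
  ultimately have "card ?A + card ?B + card ?E = card (?A \<union> ?B \<union> ?E)"
    by (simp add: card_Un_disjoint)
  also have "\<dots> \<le> occ n n M l"
    unfolding occ_def
  proof (rule card_mono)
    show "finite {(i, j). i \<in> {1..n} \<and> j \<in> {1..n} \<and> M i j = l}"
      by (rule finite_subset[of _ "{1..n} \<times> {1..n}"]) auto
    show "?A \<union> ?B \<union> ?E \<subseteq> {(i, j). i \<in> {1..n} \<and> j \<in> {1..n} \<and> M i j = l}"
      using agree I J rn sn by auto
  qed
  finally show ?thesis unfolding occ_def .
qed

lemma completable_imp_cond_rows_cols: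
  assumes "completable k rho n r s L" and rn: "r \<le> n" and sn: "s \<le> n"
  shows "cond_rows_cols n k r s L (\<lambda>l. rho l - occ r s L l)"
  unfolding cond_rows_cols_def
proof (intro allI impI)
  fix I J assume I: "I \<subseteq> {1..r}" and J: "J \<subseteq> {1..s}"
  obtain M where M: "latin_rect k n n M" "\<forall>l\<in>{1..k}. occ n n M l = rho l"
    and agree: "\<forall>i\<in>{1..r}. \<forall>j\<in>{1..s}. M i j = L i j"
    using assms(1) unfolding completable_def rho_latin_square_iff by blast
  have vals: "\<forall>x\<in>S. M (fst x) (snd x) \<in> {1..k}" if "S \<subseteq> {1..n} \<times> {1..n}" for S
    using M(1) that unfolding latin_rect_def by auto
  let ?A = "\<lambda>l. {x\<in>I \<times> {Suc s..n}. M (fst x) (snd x) = l}"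
  let ?B = "\<lambda>l. {x\<in>{Suc r..n} \<times> J. M (fst x) (snd x) = l}"
  have fin: "finite I" "finite J" using I J finite_subset by auto
  have sub: "I \<times> {Suc s..n} \<subseteq> {1..n} \<times> {1..n}" "{Suc r..n} \<times> J \<subseteq> {1..n} \<times> {1..n}"
    using I J rn sn by auto
  have "(\<Sum>l\<in>{1..k}. card (?A l)) = card (I \<times> {Suc s..n})"
    by (rule sum_card_fibres[OF _ finite_atLeastAtMost vals[OF sub(1)]]) (use fin in simp)
  moreover have "(\<Sum>l\<in>{1..k}. card (?B l)) = card ({Suc r..n} \<times> J)"
    by (rule sum_card_fibres[OF _ finite_atLeastAtMost vals[OF sub(2)]]) (use fin in simp)
  ultimately have "card I * (n - s) + card J * (n - r) = (\<Sum>l\<in>{1..k}. card (?A l)) + (\<Sum>l\<in>{1..k}. card (?B l))"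
    by (simp add: card_cartesian_product)
  also have "\<dots> \<le> (\<Sum>l\<in>{1..k}. min (rho l - occ r s L l) (mu_rows s L I l + mu_cols r L J l))"
    unfolding sum.distrib[symmetric]
  proof (rule sum_mono)
    fix l assume "l \<in> {1..k}"
    then show "card (?A l) + card (?B l) \<le> min (rho l - occ r s L l) (mu_rows s L I l + mu_cols r L J l)"
      using card_cells_outside_le[OF agree I J rn sn, of l] M(2)
        card_cells_right_le_mu_rows[OF M(1) agree I rn sn, of l]
        card_cells_below_le_mu_cols[OF M(1) agree J rn sn, of l] by simp
  qed
  finally show "card I * (n - s) + card J * (n - r)
      \<le> (\<Sum>l\<in>{1..k}. min (rho l - occ r s L l) (mu_rows s L I l + mu_cols r L J l))" .
qed

section \<open>Sufficiency\<close>

text \<open>Row i of L is the source Inl i, which is still to be given n - s symbols, and column j the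
  source Inr j, which is still to be given n - r; a line can take symbol l only if l is missing
  from it.\<close>
definition line_demand :: "nat \<Rightarrow> nat \<Rightarrow> nat \<Rightarrow> nat + nat \<Rightarrow> nat" where
  "line_demand n r s x = (case x of Inl _ \<Rightarrow> n - s | Inr _ \<Rightarrow> n - r)"

definition line_misses :: "nat \<Rightarrow> nat \<Rightarrow> (nat \<Rightarrow> nat \<Rightarrow> nat) \<Rightarrow> nat + nat \<Rightarrow> nat \<Rightarrow> nat" where
  "line_misses r s L x l = (case x of
      Inl i \<Rightarrow> if \<forall>j\<in>{1..s}. L i j \<noteq> l then 1 else 0
    | Inr j \<Rightarrow> if \<forall>i\<in>{1..r}. L i j \<noteq> l then 1 else 0)"

lemma cond_rows_cols_imp_gale_condition:
  assumes "cond_rows_cols n k r s L b"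
  shows "gale_condition (Inl ` {1..r} \<union> Inr ` {1..s}) {1..k} (line_demand n r s) b (line_misses r s L)"
  unfolding gale_condition_def
proof (intro allI impI)
  fix A assume A: "A \<subseteq> Inl ` {1..r} \<union> Inr ` {1..s}"
  define I where "I = {i. Inl i \<in> A}"
  define J where "J = {j. Inr j \<in> A}"
  have I: "I \<subseteq> {1..r}" and J: "J \<subseteq> {1..s}" using A unfolding I_def J_def by auto
  then have fin: "finite I" "finite J" using finite_subset by auto
  have A_eq: "A = Inl ` I \<union> Inr ` J"
    unfolding I_def J_def by (auto simp: image_iff) (metis sum.exhaust_sel)
  have "(\<Sum>x\<in>A. line_demand n r s x) = card I * (n - s) + card J * (n - r)"
    unfolding A_eq sum_Inl_Inr[OF fin] line_demand_def by simp
  moreover have "(\<Sum>x\<in>A. line_misses r s L x l) = mu_rows s L I l + mu_cols r L J l" for l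
    unfolding A_eq sum_Inl_Inr[OF fin] line_misses_def mu_rows_def mu_cols_def
    by (simp add: card_filter_sum[OF fin(1)] card_filter_sum[OF fin(2)])
  ultimately show "(\<Sum>x\<in>A. line_demand n r s x) \<le> (\<Sum>l\<in>{1..k}. min (b l) (\<Sum>x\<in>A. line_misses r s L x l))"
    using assms I J unfolding cond_rows_cols_def by simp
qed

lemma transport_line_sets:
  assumes f: "is_transport (Inl ` {1..r} \<union> Inr ` {1..s}) {1..k} (line_demand n r s) b (line_misses r s L) f"
  defines "R \<equiv> \<lambda>i. {l\<in>{1..k}. f (Inl i) l = 1}" and "C \<equiv> \<lambda>j. {l\<in>{1..k}. f (Inr j) l = 1}"
  shows "row_extension k (n - s) r s L R" and "row_extension k (n - r) s r (\<lambda>i j. L j i) C"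
    and "l \<in> {1..k} \<Longrightarrow> set_count r R l + set_count s C l \<le> b l"
proof -
  have f_le: "f x l \<le> line_misses r s L x l" for x l using f unfolding is_transport_def by blast
  have f_01: "f x l \<le> 1" for x l
    using f_le[of x l] unfolding line_misses_def by (auto split: sum.splits if_splits)
  have f_row: "(\<Sum>l\<in>{1..k}. f x l) = line_demand n r s x" if "x \<in> Inl ` {1..r} \<union> Inr ` {1..s}" for x
    using f that unfolding is_transport_def by blast
  have card_line: "card {l\<in>{1..k}. f x l = 1} = (\<Sum>l\<in>{1..k}. f x l)" for x
    using f_01 by (intro sum_le_1_eq_card[symmetric]) auto
  show "row_extension k (n - s) r s L R"
    unfolding row_extension_def
  proof (rule ballI, intro conjI)
    fix i assume i: "i \<in> {1..r}"
    show "R i \<subseteq> {1..k}" unfolding R_def by auto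
    show "card (R i) = n - s"
      using card_line[of "Inl i"] f_row[of "Inl i"] i unfolding R_def line_demand_def by simp
    show "\<forall>j\<in>{1..s}. L i j \<notin> R i"
    proof (intro ballI notI)
      fix j assume "j \<in> {1..s}" "L i j \<in> R i"
      then have "f (Inl i) (L i j) = 1" "line_misses r s L (Inl i) (L i j) = 0"
        unfolding R_def line_misses_def by auto
      then show False using f_le[of "Inl i" "L i j"] by simp
    qed
  qed
  show "row_extension k (n - r) s r (\<lambda>i j. L j i) C"
    unfolding row_extension_def
  proof (rule ballI, intro conjI)
    fix j assume j: "j \<in> {1..s}"
    show "C j \<subseteq> {1..k}" unfolding C_def by auto
    show "card (C j) = n - r"
      using card_line[of "Inr j"] f_row[of "Inr j"] j unfolding C_def line_demand_def by simp
    show "\<forall>i\<in>{1..r}. L i j \<notin> C j"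
    proof (intro ballI notI)
      fix i assume "i \<in> {1..r}" "L i j \<in> C j"
      then have "f (Inr j) (L i j) = 1" "line_misses r s L (Inr j) (L i j) = 0"
        unfolding C_def line_misses_def by auto
      then show False using f_le[of "Inr j" "L i j"] by simp
    qed
  qed
  assume l: "l \<in> {1..k}"
  have "{i\<in>{1..r}. l \<in> R i} = {i\<in>{1..r}. f (Inl i) l = 1}"
    "{j\<in>{1..s}. l \<in> C j} = {j\<in>{1..s}. f (Inr j) l = 1}"
    using l unfolding R_def C_def by auto
  then have "set_count r R l = (\<Sum>i\<in>{1..r}. f (Inl i) l)" "set_count s C l = (\<Sum>j\<in>{1..s}. f (Inr j) l)"
    unfolding set_count_def using f_01 by (simp_all add: sum_le_1_eq_card)
  then have "set_count r R l + set_count s C l = (\<Sum>x\<in>Inl ` {1..r} \<union> Inr ` {1..s}. f x l)"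
    by (simp add: sum_Inl_Inr)
  also have "\<dots> \<le> b l" using f l unfolding is_transport_def by blast
  finally show "set_count r R l + set_count s C l \<le> b l" .
qed

text \<open>The symbols a transport sends to row i form R i, those sent to column j form C j; the
  remaining occurrences of each symbol go to the lower right block, and the hypothesis
  e_l \<ge> \<rho>_l - n + max r s ensures that they fit there.\<close>
lemma transport_imp_outline:
  assumes L: "latin_rect k r s L" and occ_le: "\<forall>l\<in>{1..k}. occ r s L l \<le> rho l"
    and nk: "n \<le> k" and rn: "r \<le> n" and sn: "s \<le> n" and sum_rho: "(\<Sum>l\<in>{1..k}. rho l) = n ^ 2"
    and small: "\<forall>l\<in>{1..k}. rho l - occ r s L l \<le> n - max r s"
    and f: "is_transport (Inl ` {1..r} \<union> Inr ` {1..s}) {1..k} (line_demand n r s)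
              (\<lambda>l. rho l - occ r s L l) (line_misses r s L) f"
  shows "\<exists>R C w. outline n k rho r s L R C w"
proof -
  define R where "R i = {l\<in>{1..k}. f (Inl i) l = 1}" for i
  define C where "C j = {l\<in>{1..k}. f (Inr j) l = 1}" for j
  define w where "w l = rho l - occ r s L l - (set_count r R l + set_count s C l)" for l
  have R: "row_extension k (n - s) r s L R" and C: "row_extension k (n - r) s r (\<lambda>i j. L j i) C"
    and RC: "\<And>l. l \<in> {1..k} \<Longrightarrow> set_count r R l + set_count s C l \<le> rho l - occ r s L l"
    using transport_line_sets[OF f] unfolding R_def[abs_def] C_def[abs_def] by blast+
  have counts: "\<forall>l\<in>{1..k}. set_count r R l + w l \<le> n - s \<and> set_count s C l + w l \<le> n - r \<and>
      occ r s L l + set_count r R l + set_count s C l + w l = rho l"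
    using RC occ_le small unfolding w_def by fastforce
  have "(\<Sum>l\<in>{1..k}. w l + (set_count r R l + set_count s C l) + occ r s L l) = n ^ 2"
  proof (rule trans[OF sum.cong sum_rho])
    fix l assume "l \<in> {1..k}"
    then show "w l + (set_count r R l + set_count s C l) + occ r s L l = rho l"
      using counts by (simp add: algebra_simps)
  qed simp
  then have "(\<Sum>l\<in>{1..k}. w l) + r * (n - s) + s * (n - r) + r * s = n ^ 2"
    using sum_set_count[OF R] sum_set_count[OF C] sum_occ[of r s L k] L
    unfolding latin_rect_def by (simp add: sum.distrib add.assoc)
  then have "(\<Sum>l\<in>{1..k}. w l) = (n - r) * (n - s)" by (rule add_cross_terms_eq_square[OF rn sn])
  then show ?thesis using L R C counts nk rn sn unfolding outline_def by blast
qed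

lemma cond_rows_cols_imp_completable:
  assumes "n \<le> k" "r \<le> n" "s \<le> n" "(\<Sum>l\<in>{1..k}. rho l) = n ^ 2"
    and "rho_latin_rectangle k rho r s L"
    and "\<forall>l\<in>{1..k}. rho l - occ r s L l \<le> n - max r s"
    and "cond_rows_cols n k r s L (\<lambda>l. rho l - occ r s L l)"
  shows "completable k rho n r s L"
proof -
  have "finite (Inl ` {1..r} \<union> Inr ` {1..s})" by simp
  then obtain f where "is_transport (Inl ` {1..r} \<union> Inr ` {1..s}) {1..k} (line_demand n r s)
      (\<lambda>l. rho l - occ r s L l) (line_misses r s L) f"
    using gale_transport_exists[OF _ finite_atLeastAtMost cond_rows_cols_imp_gale_condition[OF assms(7)]]
    by blast
  then obtain R C w where "outline n k rho r s L R C w"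
    using transport_imp_outline[OF _ _ assms(1-4,6)] assms(5) unfolding rho_latin_rectangle_iff by blast
  then show ?thesis using outline_completable unfolding completable_def by blast
qed

theorem corollary5p2:
  fixes n k r s :: nat and rho :: "nat \<Rightarrow> nat" and L :: "nat \<Rightarrow> nat \<Rightarrow> nat"
  assumes "0 < n" "0 < k" "n \<le> k"
    and "\<forall>l\<in>{1..k}. 1 \<le> rho l \<and> rho l \<le> n"
    and "(\<Sum>l\<in>{1..k}. rho l) = n ^ 2"
    and "1 \<le> r" "1 \<le> s" "r \<le> n" "s \<le> n" "min r s < n"
    and "rho_latin_rectangle k rho r s L"
    and "\<forall>l\<in>{1..k}. int (occ r s L l) \<ge> int (rho l) - int n + int (max r s)"
  shows "(completable k rho n r s L \<longleftrightarrow>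
           (\<forall>I J. I \<subseteq> {1..r} \<longrightarrow> J \<subseteq> {1..s} \<longrightarrow>
              card I * (n - s) + card J * (n - r) \<le>
              (\<Sum>l\<in>{1..k}. min (rho l - occ r s L l) (mu_rows s L I l + mu_cols r L J l))))
       \<and> (completable k rho n r s L \<longleftrightarrow>
           (\<forall>I J K. I \<subseteq> {1..r} \<longrightarrow> J \<subseteq> {1..s} \<longrightarrow> K \<subseteq> {1..k} \<longrightarrow>
              (\<Sum>l\<in>K. rho l - occ r s L l) \<ge>
              (\<Sum>i\<in>I. (n - s) - mu_row s L ({1..k} - K) i) +
              (\<Sum>j\<in>J. (n - r) - mu_col r L ({1..k} - K) j)))"
proof -
  have "rho l - occ r s L l \<le> n - max r s" if "l \<in> {1..k}" for l
    using assms(8,9,12) that by fastforce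
  then have "completable k rho n r s L \<longleftrightarrow> cond_rows_cols n k r s L (\<lambda>l. rho l - occ r s L l)"
    using completable_imp_cond_rows_cols[OF _ assms(8,9)]
      cond_rows_cols_imp_completable[OF assms(3,8,9,5,11)] by blast
  moreover have "cond_rows_cols n k r s L (\<lambda>l. rho l - occ r s L l)
      \<longleftrightarrow> cond_rows_cols_symbols n k r s L (\<lambda>l. rho l - occ r s L l)"
    using cond_rows_cols_imp_symbols cond_symbols_imp_rows_cols by blast
  ultimately show ?thesis unfolding cond_rows_cols_def cond_rows_cols_symbols_def by blast
qed

end
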